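(* Let $t\mapsto\zeta(t)=(\xi(t),\eta(t),s(t))$, $t\in I$, be a solution of the relaxed system (R) such that for all $t\in I$: $\epsilon(t)\neq0$, $n^j(t)\neq0$ and $\partial_Tf_{\mathrm{hl}}(T^j(t),\mathbf x^j(t))\neq0$ for $j=1,\dots,S$, and $f_{\mathrm{holdup}}'(L^j(t))\neq0$ for $j=1,\dots,S-1$. Then the Jacobian $D_{(\eta,s)}g(\zeta(t))$ is non-singular for every $t\in I$ if and only if $s^1(t),\dots,s^S(t)\neq0$ for every $t\in I$.
   Context: Fix integers $S\ge 2$, $C\ge 2$ and an interval $I\subset\mathbb R$. Given are continuously differentiable real functions $f_{\mathrm{vle},i}(P,T,\mathbf x)$ ($i=1,\dots,C$), $f_{\mathrm{hl}}(T,\mathbf x)$, $f_{\mathrm{hv}}(T,\mathbf y)$, $f_{\mathrm{holdup}}(L)$. Controls are continuously differentiable real functions $\epsilon,P,Q,T^{\mathrm{cond}}$ on $I$. State variables: $n^j,H^j,T^j,V^j,s^j$, $\mathbf x^j,\mathbf y^j\in\mathbb R^C$ ($j=1,\dots,S$), $L^j$ ($j=1,\dots,S-1$); a solution is a tuple of continuously differentiable state functions satisfying all equations at every $t\in I$. "$2\le j\le S-1$" marks middle-stage equations. The relaxed system (R) consists of: (TM) $\dot n^1=L^1-V^1$; $\dot n^j=L^j-V^j-L^{j-1}+V^{j-1}$ ($2\le j\le S-1$); $\dot n^S=-\epsilon V^S-L^{S-1}+V^{S-1}$; (CM$_0$) for $i=1,\dots,C-1$: $\dot x_i^1=\big(L^1(x_i^2-x_i^1)-V^1(y_i^1-x_i^1)\big)/n^1$;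 $\dot x_i^j=\big(L^j(x_i^{j+1}-x_i^j)-V^j(y_i^j-x_i^j)+V^{j-1}(y_i^{j-1}-x_i^j)\big)/n^j$ ($2\le j\le S-1$); $\dot x_i^S=\big(\epsilon V^S(x_i^S-y_i^S)+V^{S-1}(y_i^{S-1}-x_i^S)\big)/n^S$; (EB) $\dot H^1=L^1f_{\mathrm{hl}}(T^2,\mathbf x^2)-V^1f_{\mathrm{hv}}(T^1,\mathbf y^1)+Q$; $\dot H^j=L^jf_{\mathrm{hl}}(T^{j+1},\mathbf x^{j+1})-V^jf_{\mathrm{hv}}(T^j,\mathbf y^j)-L^{j-1}f_{\mathrm{hl}}(T^j,\mathbf x^j)+V^{j-1}f_{\mathrm{hv}}(T^{j-1},\mathbf y^{j-1})$ ($2\le j\le S-1$); $\dot H^S=(1-\epsilon)V^Sf_{\mathrm{hl}}(T^{\mathrm{cond}},\mathbf y^S)-V^Sf_{\mathrm{hv}}(T^S,\mathbf y^S)-L^{S-1}f_{\mathrm{hl}}(T^S,\mathbf x^S)+V^{S-1}f_{\mathrm{hv}}(T^{S-1},\mathbf y^{S-1})$; and the algebraic equations $g=0$, with $\mathrm{aux}^1_0=\sum_{i=1}^C\big(L^1(x_i^2-x_i^1)-V^1(y_i^1-x_i^1)\big)/n^1$; for $2\le j\le S-1$, $\mathrm{aux}^j_0=\sum_{i=1}^C\big(L^j(x_i^{j+1}-x_i^j)-V^j(y_i^j-x_i^j)+V^{j-1}(y_i^{j-1}-x_i^j)\big)/n^j$; $\mathrm{aux}^S_0=\sum_{i=1}^C\big(\epsilon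 V^S(x_i^S-y_i^S)+V^{S-1}(y_i^{S-1}-x_i^S)\big)/n^S$; $\mathrm{slack}^j=\sum_{i=1}^Cy_i^j-1-s^j$; $\mathrm{ydef}_i^j=y_i^j-f_{\mathrm{vle},i}(P,T^j,\mathbf x^j)$, $\mathbf{ydef}^j=(\mathrm{ydef}_1^j,\dots,\mathrm{ydef}_C^j)$; $\mathrm{edef}^j=H^j-n^jf_{\mathrm{hl}}(T^j,\mathbf x^j)$; $\mathrm{xsum}^j=x_C^j-1+\sum_{i=1}^{C-1}x_i^j$; $\mathrm{hold}^j=n^j-f_{\mathrm{holdup}}(L^{j-1})$ ($j=2,\dots,S$); collected as $g=(\mathrm{aux}^S_0,\dots,\mathrm{aux}^1_0,\mathrm{slack}^1,\dots,\mathrm{slack}^S,\mathbf{ydef}^1,\dots,\mathbf{ydef}^S,\mathrm{edef}^1,\dots,\mathrm{edef}^S,\mathrm{xsum}^1,\dots,\mathrm{xsum}^S,\mathrm{hold}^2,\dots,\mathrm{hold}^S)$. Differential variables $\xi=(n^1,\dots,n^S,\hat{\mathbf x}^1,\dots,\hat{\mathbf x}^S,H^1,\dots,H^S)$, $\hat{\mathbf x}^j=(x^j_1,\dots,x^j_{C-1})$; algebraic variables $(\eta,s)=(V^S,\dots,V^1,s^1,\dots,s^S,\mathbf y^1,\dots,\mathbf y^S,T^1,\dots,T^S,x_C^1,\dots,x_C^S,L^1,\dots,L^{S-1})$. $D_{(\eta,s)}g$ is the Jacobian of $g$ with respect to $(\eta,s)$ (with $\xi$ and controls held fixed). *)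

theory Defs
  imports "HOL-Analysis.Analysis"
begin

text \<open>Components i = 1..C are labelled by a finite type 'c (CARD('c) = C) with a
distinguished element cC playing the role of the C-th component.\<close>

text \<open>Labels of the algebraic variables (eta,s) and of the algebraic equations g.\<close>
datatype 'c avar = AV nat | AS nat | AY nat 'c | AT nat | AXC nat | AL nat
datatype 'c geq = Gaux nat | Gslack nat | Gydef nat 'c | Gedef nat | Gxsum nat | Ghold nat

fun avar_valid :: "nat \<Rightarrow> 'c avar \<Rightarrow> bool" where
  "avar_valid S (AV j) = (1 \<le> j \<and> j \<le> S)"
| "avar_valid S (AS j) = (1 \<le> j \<and> j \<le> S)"
| "avar_valid S (AY j i) = (1 \<le> j \<and> j \<le> S)"
| "avar_valid S (AT j) = (1 \<le> j \<and> j \<le> S)"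
| "avar_valid S (AXC j) = (1 \<le> j \<and> j \<le> S)"
| "avar_valid S (AL j) = (1 \<le> j \<and> j \<le> S - 1)"

fun geq_valid :: "nat \<Rightarrow> 'c geq \<Rightarrow> bool" where
  "geq_valid S (Gaux j) = (1 \<le> j \<and> j \<le> S)"
| "geq_valid S (Gslack j) = (1 \<le> j \<and> j \<le> S)"
| "geq_valid S (Gydef j i) = (1 \<le> j \<and> j \<le> S)"
| "geq_valid S (Gedef j) = (1 \<le> j \<and> j \<le> S)"
| "geq_valid S (Gxsum j) = (1 \<le> j \<and> j \<le> S)"
| "geq_valid S (Ghold j) = (2 \<le> j \<and> j \<le> S)"

text \<open>Full composition vector x^j: components i \<noteq> cC from the differential part
(hat x^j), component cC from the algebraic variable x_C^j.\<close>
definition xfull :: "'c \<Rightarrow> (nat \<Rightarrow> real^'c) \<Rightarrow> ('c avar \<Rightarrow> real) \<Rightarrow> nat \<Rightarrow> real^'c" where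
  "xfull cC xh a j = (\<chi> i. if i = cC then a (AXC j) else xh j $ i)"

text \<open>The algebraic equations g, as a function of the algebraic variables a
(with the differential variables n, H, hat x and the controls eps, P held fixed).\<close>
definition gfun ::
  "nat \<Rightarrow> 'c::finite \<Rightarrow> ('c \<Rightarrow> real \<Rightarrow> real \<Rightarrow> real^'c \<Rightarrow> real) \<Rightarrow> (real \<Rightarrow> real^'c \<Rightarrow> real)
   \<Rightarrow> (real \<Rightarrow> real) \<Rightarrow> real \<Rightarrow> real \<Rightarrow> (nat \<Rightarrow> real) \<Rightarrow> (nat \<Rightarrow> real) \<Rightarrow> (nat \<Rightarrow> real^'c)
   \<Rightarrow> ('c avar \<Rightarrow> real) \<Rightarrow> 'c geq \<Rightarrow> real" where
  "gfun S cC fvle fhl fhold eps P n H xh a e =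
    (let x = xfull cC xh a; y = (\<lambda>j. \<chi> i. a (AY j i)); V = (\<lambda>j. a (AV j));
         L = (\<lambda>j. a (AL j)); T = (\<lambda>j. a (AT j)); s = (\<lambda>j. a (AS j)) in
     case e of
       Gaux j \<Rightarrow>
         (if j = 1 then (\<Sum>i\<in>UNIV. (L 1 * (x 2 $ i - x 1 $ i) - V 1 * (y 1 $ i - x 1 $ i)) / n 1)
          else if j = S then
            (\<Sum>i\<in>UNIV. (eps * V S * (x S $ i - y S $ i) + V (S - 1) * (y (S - 1) $ i - x S $ i)) / n S)
          else (\<Sum>i\<in>UNIV. (L j * (x (j + 1) $ i - x j $ i) - V j * (y j $ i - x j $ i)
                            + V (j - 1) * (y (j - 1) $ i - x j $ i)) / n j))
     | Gslack j \<Rightarrow> (\<Sum>i\<in>UNIV. y j $ i) - 1 - s j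
     | Gydef j i \<Rightarrow> y j $ i - fvle i P (T j) (x j)
     | Gedef j \<Rightarrow> H j - n j * fhl (T j) (x j)
     | Gxsum j \<Rightarrow> x j $ cC - 1 + (\<Sum>i\<in>UNIV - {cC}. x j $ i)
     | Ghold j \<Rightarrow> n j - fhold (L (j - 1)))"

definition gjac where
  "gjac S cC fvle fhl fhold eps P n H xh a e v =
     deriv (\<lambda>r. gfun S cC fvle fhl fhold eps P n H xh (a(v := r)) e) (a v)"

text \<open>Non-singularity: the (square) Jacobian, as a linear map between the spaces of
vectors indexed by the valid variable labels and the valid equation labels, is invertible.\<close>
definition jac_nonsingular where
  "jac_nonsingular S cC fvle fhl fhold eps P n H xh a \<longleftrightarrow>
     bij_betw
       (\<lambda>w e. if geq_valid S e
              then (\<Sum>v\<in>{v. avar_valid S v}. gjac S cC fvle fhl fhold eps P n H xh a e v * w v)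
              else 0)
       {w. \<forall>v. \<not> avar_valid S v \<longrightarrow> w v = 0}
       {u. \<forall>e. \<not> geq_valid S e \<longrightarrow> u e = 0}"

definition C1_map :: "('a::real_normed_vector \<Rightarrow> 'b::real_normed_vector) \<Rightarrow> bool" where
  "C1_map f \<longleftrightarrow> (\<exists>f'. (\<forall>z. (f has_derivative blinfun_apply (f' z)) (at z)) \<and> continuous_on UNIV f')"

definition C1_on :: "real set \<Rightarrow> (real \<Rightarrow> 'a::real_normed_vector) \<Rightarrow> bool" where
  "C1_on I f \<longleftrightarrow> (\<exists>f'. (\<forall>t\<in>I. (f has_vector_derivative f' t) (at t within I)) \<and> continuous_on I f')"

definition alg_state where
  "alg_state cC V s y T x L t =
     (\<lambda>v. case v of AV j \<Rightarrow> V j t | AS j \<Rightarrow> s j t | AY j i \<Rightarrow> y j t $ i | AT j \<Rightarrow> T j t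
                | AXC j \<Rightarrow> x j t $ cC | AL j \<Rightarrow> L j t)"

definition relaxed_solution ::
  "nat \<Rightarrow> 'c::finite \<Rightarrow> real set \<Rightarrow> ('c \<Rightarrow> real \<Rightarrow> real \<Rightarrow> real^'c \<Rightarrow> real) \<Rightarrow> (real \<Rightarrow> real^'c \<Rightarrow> real)
   \<Rightarrow> (real \<Rightarrow> real^'c \<Rightarrow> real) \<Rightarrow> (real \<Rightarrow> real)
   \<Rightarrow> (real \<Rightarrow> real) \<Rightarrow> (real \<Rightarrow> real) \<Rightarrow> (real \<Rightarrow> real) \<Rightarrow> (real \<Rightarrow> real)
   \<Rightarrow> (nat \<Rightarrow> real \<Rightarrow> real) \<Rightarrow> (nat \<Rightarrow> real \<Rightarrow> real) \<Rightarrow> (nat \<Rightarrow> real \<Rightarrow> real) \<Rightarrow> (nat \<Rightarrow> real \<Rightarrow> real)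
   \<Rightarrow> (nat \<Rightarrow> real \<Rightarrow> real) \<Rightarrow> (nat \<Rightarrow> real \<Rightarrow> real^'c) \<Rightarrow> (nat \<Rightarrow> real \<Rightarrow> real^'c)
   \<Rightarrow> (nat \<Rightarrow> real \<Rightarrow> real) \<Rightarrow> bool" where
  "relaxed_solution S cC I fvle fhl fhv fhold eps P Q Tc n H T V s x y L \<longleftrightarrow>
    (\<forall>j\<in>{1..S}. C1_on I (n j) \<and> C1_on I (H j) \<and> C1_on I (T j) \<and> C1_on I (V j)
                 \<and> C1_on I (s j) \<and> C1_on I (x j) \<and> C1_on I (y j)) \<and>
    (\<forall>j\<in>{1..S-1}. C1_on I (L j)) \<and>
    (\<forall>t\<in>I.
      \<comment> \<open>(TM)\<close>
      (n 1 has_real_derivative (L 1 t - V 1 t)) (at t within I) \<and>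
      (\<forall>j. 2 \<le> j \<and> j \<le> S - 1 \<longrightarrow>
         (n j has_real_derivative (L j t - V j t - L (j - 1) t + V (j - 1) t)) (at t within I)) \<and>
      (n S has_real_derivative (- eps t * V S t - L (S - 1) t + V (S - 1) t)) (at t within I) \<and>
      \<comment> \<open>(CM_0), i = 1..C-1, i.e. i \<noteq> cC\<close>
      (\<forall>i. i \<noteq> cC \<longrightarrow>
        ((\<lambda>t. x 1 t $ i) has_real_derivative
           ((L 1 t * (x 2 t $ i - x 1 t $ i) - V 1 t * (y 1 t $ i - x 1 t $ i)) / n 1 t)) (at t within I) \<and>
        (\<forall>j. 2 \<le> j \<and> j \<le> S - 1 \<longrightarrow>
          ((\<lambda>t. x j t $ i) has_real_derivative
            ((L j t * (x (j + 1) t $ i - x j t $ i) - V j t * (y j t $ i - x j t $ i)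
              + V (j - 1) t * (y (j - 1) t $ i - x j t $ i)) / n j t)) (at t within I)) \<and>
        ((\<lambda>t. x S t $ i) has_real_derivative
           ((eps t * V S t * (x S t $ i - y S t $ i) + V (S - 1) t * (y (S - 1) t $ i - x S t $ i)) / n S t))
           (at t within I)) \<and>
      \<comment> \<open>(EB)\<close>
      (H 1 has_real_derivative
         (L 1 t * fhl (T 2 t) (x 2 t) - V 1 t * fhv (T 1 t) (y 1 t) + Q t)) (at t within I) \<and>
      (\<forall>j. 2 \<le> j \<and> j \<le> S - 1 \<longrightarrow>
         (H j has_real_derivative
            (L j t * fhl (T (j + 1) t) (x (j + 1) t) - V j t * fhv (T j t) (y j t)
             - L (j - 1) t * fhl (T j t) (x j t) + V (j - 1) t * fhv (T (j - 1) t) (y (j - 1) t)))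
           (at t within I)) \<and>
      (H S has_real_derivative
         ((1 - eps t) * V S t * fhl (Tc t) (y S t) - V S t * fhv (T S t) (y S t)
          - L (S - 1) t * fhl (T S t) (x S t) + V (S - 1) t * fhv (T (S - 1) t) (y (S - 1) t)))
         (at t within I) \<and>
      \<comment> \<open>g = 0\<close>
      (\<forall>e. geq_valid S e \<longrightarrow>
         gfun S cC fvle fhl fhold (eps t) (P t) (\<lambda>j. n j t) (\<lambda>j. H j t) (\<lambda>j. x j t)
              (alg_state cC V s y T x L t) e = 0))"

end

theory Submission
  imports Defs
begin

text \<open>Order the algebraic variables as x_C, L, T, y, s, V^1, ..., V^S and pair each with the
equation xsum, hold, edef, ydef, slack, aux of its stage. Every equation involves its paired
variable and otherwise only variables earlier in this order, so D_(eta,s) g is triangular and is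
nonsingular exactly when all its pivots are nonzero. The pivots are 1, -f_holdup'(L^j),
-n^j d_T f_hl, 1, -1, and for aux^j the derivative -(sum_i y_i^j - sum_i x_i^j)/n^j (times eps
for j = S), which the slack and xsum equations turn into -s^j/n^j. Under the nondegeneracy
hypotheses only these last pivots can vanish.\<close>

definition pivot_triangular :: "'v set \<Rightarrow> ('v \<Rightarrow> 'e) \<Rightarrow> ('v \<Rightarrow> nat) \<Rightarrow> ('e \<Rightarrow> 'v \<Rightarrow> real) \<Rightarrow> bool"
  where "pivot_triangular A piv rk M \<longleftrightarrow>
    (\<forall>v\<in>A. \<forall>v'\<in>A. v' \<noteq> v \<longrightarrow> rk v \<le> rk v' \<longrightarrow> M (piv v) v' = 0)"

lemma pivot_triangular_subset:
  "pivot_triangular A piv rk M \<Longrightarrow> A' \<subseteq> A \<Longrightarrow> pivot_triangular A' piv rk M"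
  unfolding pivot_triangular_def by blast

lemma pivot_triangular_row:
  assumes "pivot_triangular A piv rk M" "finite A" "v \<in> A"
  shows "(\<Sum>v'\<in>A. M (piv v) v' * w v') =
           M (piv v) v * w v + (\<Sum>v'\<in>{v'\<in>A. rk v' < rk v}. M (piv v) v' * w v')"
proof -
  have "(\<Sum>v'\<in>A. M (piv v) v' * w v')
      = (\<Sum>v'\<in>insert v {v'\<in>A. rk v' < rk v}. M (piv v) v' * w v')"
    using assms by (intro sum.mono_neutral_right) (auto simp: pivot_triangular_def not_le[symmetric])
  also have "\<dots> = M (piv v) v * w v + (\<Sum>v'\<in>{v'\<in>A. rk v' < rk v}. M (piv v) v' * w v')"
    using assms(2) by (subst sum.insert) auto
  finally show ?thesis .
qed

lemma pivot_triangular_solvable_below_rank: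
  assumes tri: "pivot_triangular A piv rk M" and fin: "finite A"
    and diag: "\<forall>v\<in>A. M (piv v) v \<noteq> 0"
  shows "\<exists>w. (\<forall>v. v \<notin> A \<longrightarrow> w v = 0)
             \<and> (\<forall>v\<in>A. rk v < m \<longrightarrow> (\<Sum>v'\<in>A. M (piv v) v' * w v') = g v)"
proof -
  define lower where "lower v w = (\<Sum>v'\<in>{v'\<in>A. rk v' < rk v}. M (piv v) v' * w v')" for v w
  have row: "(\<Sum>v'\<in>A. M (piv v) v' * w v') = M (piv v) v * w v + lower v w" if "v \<in> A" for v w
    unfolding lower_def using pivot_triangular_row[OF tri fin that] .
  show ?thesis
  proof (induction m)
    case 0
    show ?case by (rule exI[of _ "\<lambda>_. 0"]) simp
  next
    case (Suc m)
    then obtain w where w0: "\<forall>v. v \<notin> A \<longrightarrow> w v = 0"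
      and wsol: "\<forall>v\<in>A. rk v < m \<longrightarrow> (\<Sum>v'\<in>A. M (piv v) v' * w v') = g v"
      by blast
    define w' where
      "w' v = (if v \<in> A \<and> rk v = m then (g v - lower v w) / M (piv v) v else w v)" for v
    have lower_eq: "lower v w' = lower v w" if "rk v \<le> m" for v
      unfolding lower_def using that by (intro sum.cong) (auto simp: w'_def)
    show ?case
    proof (intro exI conjI ballI impI allI)
      fix v assume "v \<notin> A"
      then show "w' v = 0" using w0 by (simp add: w'_def)
    next
      fix v assume v: "v \<in> A" "rk v < Suc m"
      show "(\<Sum>v'\<in>A. M (piv v) v' * w' v') = g v"
      proof -
        have "(\<Sum>v'\<in>A. M (piv v) v' * w' v') = M (piv v) v * w' v + lower v w"
          using row[OF v(1)] lower_eq[of v] v(2) by simp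
        also have "\<dots> = g v"
        proof (cases "rk v = m")
          case True
          then show ?thesis using v(1) diag by (simp add: w'_def)
        next
          case False
          then have "w' v = w v" "rk v < m" using v by (auto simp: w'_def)
          then show ?thesis using wsol v(1) row[OF v(1), of w] by simp
        qed
        finally show ?thesis .
      qed
    qed
  qed
qed

lemma pivot_triangular_solvable:
  assumes "pivot_triangular A piv rk M" "finite A" "\<forall>v\<in>A. M (piv v) v \<noteq> 0"
  shows "\<exists>w. (\<forall>v. v \<notin> A \<longrightarrow> w v = 0) \<and> (\<forall>v\<in>A. (\<Sum>v'\<in>A. M (piv v) v' * w v') = g v)"
proof -
  obtain w where "\<forall>v. v \<notin> A \<longrightarrow> w v = 0"
    and "\<forall>v\<in>A. rk v < Suc (Max (rk ` A)) \<longrightarrow> (\<Sum>v'\<in>A. M (piv v) v' * w v') = g v"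
    using pivot_triangular_solvable_below_rank[OF assms, where m = "Suc (Max (rk ` A))" and g = g]
    by auto
  then show ?thesis
    using assms(2) by (intro exI[of _ w]) (simp add: le_imp_less_Suc)
qed

lemma pivot_triangular_kernel:
  assumes tri: "pivot_triangular A piv rk M" and fin: "finite A"
    and diag: "\<forall>v\<in>A. M (piv v) v \<noteq> 0"
    and ker: "\<forall>v\<in>A. (\<Sum>v'\<in>A. M (piv v) v' * d v') = 0"
  shows "v \<in> A \<Longrightarrow> d v = 0"
proof (induction v rule: measure_induct_rule[of rk])
  case (less v)
  have "(\<Sum>v'\<in>{v'\<in>A. rk v' < rk v}. M (piv v) v' * d v') = 0"
    using less.IH by (intro sum.neutral) simp
  then have "M (piv v) v * d v = 0"
    using ker pivot_triangular_row[OF tri fin less.prems, of d] less.prems by simp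
  then show ?case using diag less.prems by simp
qed

lemma pivot_triangular_singular:
  assumes tri: "pivot_triangular A piv rk M" and fin: "finite A"
    and v0: "v0 \<in> A" "M (piv v0) v0 = 0"
  shows "\<exists>d. (\<forall>v. v \<notin> A \<longrightarrow> d v = 0) \<and> (\<forall>v\<in>A. (\<Sum>v'\<in>A. M (piv v) v' * d v') = 0)
             \<and> d \<noteq> (\<lambda>_. 0)"
proof -
  txt \<open>Take a vanishing pivot \<open>z\<close> of maximal rank; above it all pivots are nonzero, so the rows
    of higher rank can be solved to cancel column \<open>z\<close>, while the rows of lower rank do not see it.\<close>
  define Z where "Z = {v\<in>A. M (piv v) v = 0}"
  have "finite Z" "Z \<noteq> {}" using fin v0 by (auto simp: Z_def)
  then have "Max (rk ` Z) \<in> rk ` Z" by simp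
  then obtain z where z: "z \<in> Z" and "rk z = Max (rk ` Z)" by auto
  then have z_max: "\<forall>v\<in>Z. rk v \<le> rk z" using \<open>finite Z\<close> by simp
  define A' where "A' = {v\<in>A. rk z < rk v}"
  have "A' \<subseteq> A" by (auto simp: A'_def)
  then have tri': "pivot_triangular A' piv rk M" and fin': "finite A'"
    using pivot_triangular_subset[OF tri] finite_subset[OF _ fin] by auto
  have "\<forall>v\<in>A'. M (piv v) v \<noteq> 0"
    using z_max by (auto simp: A'_def Z_def)
  then obtain w where w0: "\<forall>v. v \<notin> A' \<longrightarrow> w v = 0"
    and wsol: "\<forall>v\<in>A'. (\<Sum>v'\<in>A'. M (piv v) v' * w v') = - M (piv v) z"
    using pivot_triangular_solvable[OF tri' fin', of "\<lambda>v. - M (piv v) z"] by blast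
  define d where "d v = w v + of_bool (v = z)" for v
  have "(\<Sum>v'\<in>A. M (piv v) v' * d v') = 0" if v: "v \<in> A" for v
  proof (cases "v \<in> A'")
    case True
    have "(\<Sum>v'\<in>A. M (piv v) v' * d v') = (\<Sum>v'\<in>A. M (piv v) v' * w v') + M (piv v) z"
      using fin z by (simp add: d_def distrib_left sum.distrib Z_def)
    also have "(\<Sum>v'\<in>A. M (piv v) v' * w v') = (\<Sum>v'\<in>A'. M (piv v) v' * w v')"
      using w0 by (intro sum.mono_neutral_right) (auto simp: A'_def fin)
    finally show ?thesis using wsol True by simp
  next
    case False
    then have "rk v \<le> rk z" using v by (simp add: A'_def)
    have "M (piv v) v * d v = 0"
      using False w0 z by (cases "v = z") (auto simp: d_def Z_def)
    moreover have "d v' = 0" if "v' \<in> A" "rk v' < rk v" for v'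
      using that w0 \<open>rk v \<le> rk z\<close> by (auto simp: d_def A'_def)
    ultimately show ?thesis
      using pivot_triangular_row[OF tri fin v, of d] by simp
  qed
  moreover have "\<forall>v. v \<notin> A \<longrightarrow> d v = 0"
    using w0 z \<open>A' \<subseteq> A\<close> by (auto simp: d_def Z_def)
  moreover have "d z = 1" using w0 by (simp add: d_def A'_def)
  then have "d \<noteq> (\<lambda>_. 0)" by (metis zero_neq_one)
  ultimately show ?thesis by (intro exI[of _ d] conjI) auto
qed

lemma bij_betw_pivot_triangular_iff:
  assumes tri: "pivot_triangular A piv rk M" and fin: "finite A" and piv: "bij_betw piv A B"
  shows "bij_betw (\<lambda>w e. if e \<in> B then \<Sum>v\<in>A. M e v * w v else 0)
           {w. \<forall>v. v \<notin> A \<longrightarrow> w v = 0} {u. \<forall>e. e \<notin> B \<longrightarrow> u e = 0}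
         \<longleftrightarrow> (\<forall>v\<in>A. M (piv v) v \<noteq> 0)"
    (is "bij_betw ?F ?W ?U \<longleftrightarrow> _")
proof -
  have piv_B: "piv v \<in> B" if "v \<in> A" for v
    using piv that by (auto simp: bij_betw_def)
  have B_piv: "\<exists>v\<in>A. e = piv v" if "e \<in> B" for e
    using piv that by (auto simp: bij_betw_def)
  show ?thesis
  proof
    assume bij: "bij_betw ?F ?W ?U"
    show "\<forall>v\<in>A. M (piv v) v \<noteq> 0"
    proof (rule ccontr)
      assume "\<not> (\<forall>v\<in>A. M (piv v) v \<noteq> 0)"
      then obtain d where d: "d \<in> ?W" "d \<noteq> (\<lambda>_. 0)"
        and ker: "\<forall>v\<in>A. (\<Sum>v'\<in>A. M (piv v) v' * d v') = 0"
        using pivot_triangular_singular[OF tri fin] by blast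
      have "?F d = ?F (\<lambda>_. 0)"
        using ker by (auto simp: fun_eq_iff dest: B_piv)
      moreover have "inj_on ?F ?W" using bij by (simp add: bij_betw_def)
      ultimately have "d = (\<lambda>_. 0)" using d(1) by (auto dest: inj_onD)
      with d(2) show False ..
    qed
  next
    assume diag: "\<forall>v\<in>A. M (piv v) v \<noteq> 0"
    have "inj_on ?F ?W"
    proof (rule inj_onI)
      fix w1 w2 assume w: "w1 \<in> ?W" "w2 \<in> ?W" and eq: "?F w1 = ?F w2"
      have "\<forall>v\<in>A. (\<Sum>v'\<in>A. M (piv v) v' * (w1 v' - w2 v')) = 0"
      proof
        fix v assume "v \<in> A"
        then show "(\<Sum>v'\<in>A. M (piv v) v' * (w1 v' - w2 v')) = 0"
          using fun_cong[OF eq, of "piv v"] piv_B by (simp add: right_diff_distrib sum_subtractf)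
      qed
      then have "w1 v - w2 v = 0" if "v \<in> A" for v
        using pivot_triangular_kernel[OF tri fin diag _ that, of "\<lambda>v. w1 v - w2 v"] by simp
      then show "w1 = w2" using w by fastforce
    qed
    moreover have "?U \<subseteq> ?F ` ?W"
    proof
      fix u assume u: "u \<in> ?U"
      obtain w where w0: "w \<in> ?W" and wsol: "\<forall>v\<in>A. (\<Sum>v'\<in>A. M (piv v) v' * w v') = u (piv v)"
        using pivot_triangular_solvable[OF tri fin diag, of "\<lambda>v. u (piv v)"] by blast
      have "?F w = u"
        using u wsol by (auto simp: fun_eq_iff dest: B_piv)
      then show "u \<in> ?F ` ?W" using w0 by blast
    qed
    moreover have "?F ` ?W \<subseteq> ?U" by auto
    ultimately show "bij_betw ?F ?W ?U" by (auto simp: bij_betw_def)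
  qed
qed

text \<open>aux^j involves V^(j-1), hence the ranks of the V^j increase with j.\<close>

fun elim_rank :: "'c avar \<Rightarrow> nat" where
  "elim_rank (AXC j) = 0"
| "elim_rank (AL j) = 1"
| "elim_rank (AT j) = 2"
| "elim_rank (AY j i) = 3"
| "elim_rank (AS j) = 4"
| "elim_rank (AV j) = 5 + j"

fun pivot_eq :: "'c avar \<Rightarrow> 'c geq" where
  "pivot_eq (AXC j) = Gxsum j"
| "pivot_eq (AL j) = Ghold (Suc j)"
| "pivot_eq (AT j) = Gedef j"
| "pivot_eq (AY j i) = Gydef j i"
| "pivot_eq (AS j) = Gslack j"
| "pivot_eq (AV j) = Gaux j"

lemma finite_avar_valid: "finite {v :: 'c::finite avar. avar_valid S v}"
proof (rule finite_subset)
  show "{v :: 'c avar. avar_valid S v} \<subseteq> AV ` {1..S} \<union> AS ` {1..S}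
      \<union> case_prod AY ` ({1..S} \<times> UNIV) \<union> AT ` {1..S} \<union> AXC ` {1..S} \<union> AL ` {1..S-1}"
  proof
    fix v :: "'c avar" assume "v \<in> {v. avar_valid S v}"
    then show "v \<in> AV ` {1..S} \<union> AS ` {1..S}
      \<union> case_prod AY ` ({1..S} \<times> UNIV) \<union> AT ` {1..S} \<union> AXC ` {1..S} \<union> AL ` {1..S-1}"
      by (cases v) auto
  qed
qed simp

lemma bij_betw_pivot_eq: "bij_betw pivot_eq {v. avar_valid S v} {e. geq_valid S e}"
proof (rule bij_betw_imageI)
  show "inj_on pivot_eq {v. avar_valid S v}"
  proof (rule inj_onI)
    fix v w :: "'c avar" assume "pivot_eq v = pivot_eq w"
    then show "v = w" by (cases v; cases w) auto
  qed
  show "pivot_eq ` {v. avar_valid S v} = {e. geq_valid S e}"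
  proof (intro equalityI subsetI)
    fix e assume "e \<in> pivot_eq ` {v. avar_valid S v}"
    then show "e \<in> {e. geq_valid S e}" by (auto elim!: avar_valid.elims)
  next
    fix e :: "'c geq" assume e: "e \<in> {e. geq_valid S e}"
    show "e \<in> pivot_eq ` {v. avar_valid S v}"
    proof (cases e)
      case (Ghold j)
      with e show ?thesis by (intro image_eqI[of _ _ "AL (j - 1)"]) auto
    qed (use e in \<open>auto intro: image_eqI[where x = "AV _"] image_eqI[where x = "AS _"]
           image_eqI[where x = "AY _ _"] image_eqI[where x = "AT _"] image_eqI[where x = "AXC _"]\<close>)
  qed
qed

lemma xfull_upd: "v \<noteq> AXC j \<Longrightarrow> xfull cC xh (a(v := r)) j = xfull cC xh a j"
  by (auto simp: xfull_def)

lemma gfun_pivot_eq_upd: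
  assumes "v' \<noteq> v" "elim_rank v \<le> elim_rank v'"
  shows "gfun S cC fvle fhl fhold eps P n H xh (a(v' := r)) (pivot_eq v)
       = gfun S cC fvle fhl fhold eps P n H xh a (pivot_eq v)"
  using assms unfolding gfun_def Let_def
  by (cases v; cases v') (auto simp: xfull_upd)

lemma pivot_triangular_gjac:
  "pivot_triangular {v. avar_valid S v} pivot_eq elim_rank (gjac S cC fvle fhl fhold eps P n H xh a)"
  unfolding pivot_triangular_def gjac_def by (simp add: gfun_pivot_eq_upd)

lemma gjac_eqI:
  assumes "\<And>r. gfun S cC fvle fhl fhold eps P n H xh (a(v := r)) e = f r"
    and "(f has_real_derivative D) (at (a v))"
  shows "gjac S cC fvle fhl fhold eps P n H xh a e v = D"
proof -
  have "(\<lambda>r. gfun S cC fvle fhl fhold eps P n H xh (a(v := r)) e) = f"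
    using assms(1) by (rule ext)
  then show ?thesis using assms(2) by (simp add: gjac_def DERIV_imp_deriv)
qed

lemma C1_map_has_real_derivative:
  "C1_map f \<Longrightarrow> (f has_real_derivative deriv f z) (at z)"
  unfolding C1_map_def DERIV_deriv_iff_real_differentiable differentiable_def by blast

lemma C1_map_partial_has_real_derivative:
  assumes "C1_map (\<lambda>(t, z). f t z)"
  shows "((\<lambda>t. f t z) has_real_derivative deriv (\<lambda>t. f t z) t) (at t)"
proof -
  have "(\<lambda>(t, z). f t z) differentiable (at (t, z))"
    using assms unfolding C1_map_def differentiable_def by blast
  then have "((\<lambda>(t, z). f t z) \<circ> (\<lambda>t. (t, z))) differentiable (at t)"
    by (intro differentiable_chain_at) simp_all
  then show ?thesis by (simp add: o_def DERIV_deriv_iff_real_differentiable)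
qed

lemma gjac_xsum_diag: "gjac S cC fvle fhl fhold eps P n H xh a (Gxsum j) (AXC j) = 1"
  by (rule gjac_eqI[where f = "\<lambda>r. r - 1 + (\<Sum>i\<in>UNIV - {cC}. xh j $ i)"])
    (auto simp: gfun_def xfull_def intro!: sum.cong derivative_eq_intros)

lemma gjac_hold_diag:
  "C1_map fhold \<Longrightarrow>
    gjac S cC fvle fhl fhold eps P n H xh a (Ghold (Suc j)) (AL j) = - deriv fhold (a (AL j))"
  by (rule gjac_eqI[where f = "\<lambda>r. n (Suc j) - fhold r"])
    (use C1_map_has_real_derivative in \<open>auto simp: gfun_def intro!: derivative_eq_intros\<close>)

lemma gjac_edef_diag:
  "C1_map (\<lambda>(t, z). fhl t z) \<Longrightarrow> gjac S cC fvle fhl fhold eps P n H xh a (Gedef j) (AT j)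
     = - n j * deriv (\<lambda>t. fhl t (xfull cC xh a j)) (a (AT j))"
  by (rule gjac_eqI[where f = "\<lambda>r. H j - n j * fhl r (xfull cC xh a j)"])
    (use C1_map_partial_has_real_derivative[of fhl] in
      \<open>auto simp: gfun_def xfull_upd intro!: derivative_eq_intros\<close>)

lemma gjac_ydef_diag: "gjac S cC fvle fhl fhold eps P n H xh a (Gydef j i) (AY j i) = 1"
  by (rule gjac_eqI[where f = "\<lambda>r. r - fvle i P (a (AT j)) (xfull cC xh a j)"])
    (auto simp: gfun_def xfull_upd intro!: derivative_eq_intros)

lemma gjac_slack_diag: "gjac S cC fvle fhl fhold eps P n H xh a (Gslack j) (AS j) = -1"
  by (rule gjac_eqI[where f = "\<lambda>r. (\<Sum>i\<in>UNIV. a (AY j i)) - 1 - r"])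
    (auto simp: gfun_def intro!: derivative_eq_intros)

lemma gjac_aux_diag:
  assumes "2 \<le> S" "1 \<le> j" "j \<le> S" "n j \<noteq> 0"
    and xsum: "gfun S cC fvle fhl fhold eps P n H xh a (Gxsum j) = 0"
    and slack: "gfun S cC fvle fhl fhold eps P n H xh a (Gslack j) = 0"
  shows "gjac S cC fvle fhl fhold eps P n H xh a (Gaux j) (AV j)
           = (if j = S then - eps * a (AS j) / n j else - a (AS j) / n j)"
proof -
  define x where "x = xfull cC xh a"
  have "(\<Sum>i\<in>UNIV. x j $ i) = 1"
    using xsum by (simp add: gfun_def Let_def x_def sum.remove[of UNIV cC])
  moreover have "(\<Sum>i\<in>UNIV. a (AY j i)) = 1 + a (AS j)"
    using slack by (simp add: gfun_def)
  ultimately have slack_sum: "(\<Sum>i\<in>UNIV. - (a (AY j i) - x j $ i) / n j) = - a (AS j) / n j"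
    by (simp add: sum_negf sum_subtractf sum_divide_distrib[symmetric])
  consider "j = 1" | "j = S" | "j \<noteq> 1" "j \<noteq> S" by blast
  then show ?thesis
  proof cases
    case 1
    show ?thesis
      by (rule gjac_eqI[where f = "\<lambda>r. \<Sum>i\<in>UNIV.
            (a (AL 1) * (x 2 $ i - x 1 $ i) - r * (a (AY 1 i) - x 1 $ i)) / n 1"])
        (use 1 assms(1,4) slack_sum in
          \<open>auto simp: gfun_def x_def xfull_upd intro!: DERIV_sum derivative_eq_intros\<close>)
  next
    case 2
    have "(\<Sum>i\<in>UNIV. eps * (x S $ i - a (AY S i)) / n S)
        = eps * (\<Sum>i\<in>UNIV. - (a (AY S i) - x S $ i) / n S)"
      by (simp add: sum_distrib_left)
    then have slack_sum_S: "(\<Sum>i\<in>UNIV. eps * (x S $ i - a (AY S i)) / n S) = - eps * a (AS S) / n S"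
      using slack_sum 2 by simp
    show ?thesis
      by (rule gjac_eqI[where f = "\<lambda>r. \<Sum>i\<in>UNIV.
            (eps * r * (x S $ i - a (AY S i)) + a (AV (S - 1)) * (a (AY (S - 1) i) - x S $ i)) / n S"])
        (use 2 assms(1,4) slack_sum_S in
          \<open>auto simp: gfun_def x_def xfull_upd intro!: DERIV_sum derivative_eq_intros\<close>)
  next
    case 3
    show ?thesis
      by (rule gjac_eqI[where f = "\<lambda>r. \<Sum>i\<in>UNIV.
            (a (AL j) * (x (j + 1) $ i - x j $ i) - r * (a (AY j i) - x j $ i)
             + a (AV (j - 1)) * (a (AY (j - 1) i) - x j $ i)) / n j"])
        (use 3 assms(2,4) slack_sum in
          \<open>auto simp: gfun_def x_def xfull_upd intro!: DERIV_sum derivative_eq_intros\<close>)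
  qed
qed

lemma jac_nonsingular_iff_slacks_nonzero:
  assumes "2 \<le> S" and "C1_map (\<lambda>(t, z). fhl t z)" and "C1_map fhold"
    and "\<forall>e. geq_valid S e \<longrightarrow> gfun S cC fvle fhl fhold eps P n H xh a e = 0"
    and "eps \<noteq> 0" "\<forall>j\<in>{1..S}. n j \<noteq> 0"
    and "\<forall>j\<in>{1..S}. deriv (\<lambda>t. fhl t (xfull cC xh a j)) (a (AT j)) \<noteq> 0"
    and "\<forall>j\<in>{1..S-1}. deriv fhold (a (AL j)) \<noteq> 0"
  shows "jac_nonsingular S cC fvle fhl fhold eps P n H xh a \<longleftrightarrow> (\<forall>j\<in>{1..S}. a (AS j) \<noteq> 0)"
proof -
  let ?M = "gjac S cC fvle fhl fhold eps P n H xh a"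
  have diag: "?M (pivot_eq v) v \<noteq> 0 \<longleftrightarrow> (case v of AV j \<Rightarrow> a (AS j) \<noteq> 0 | _ \<Rightarrow> True)"
    if "avar_valid S v" for v
    using that assms
    by (cases v) (auto simp: gjac_xsum_diag gjac_hold_diag gjac_edef_diag gjac_ydef_diag
        gjac_slack_diag gjac_aux_diag)
  have "jac_nonsingular S cC fvle fhl fhold eps P n H xh a
          \<longleftrightarrow> (\<forall>v\<in>{v. avar_valid S v}. ?M (pivot_eq v) v \<noteq> 0)"
    using bij_betw_pivot_triangular_iff[OF pivot_triangular_gjac finite_avar_valid bij_betw_pivot_eq]
    by (simp add: jac_nonsingular_def)
  also have "\<dots> \<longleftrightarrow> (\<forall>j\<in>{1..S}. a (AS j) \<noteq> 0)"
  proof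
    assume "\<forall>v\<in>{v. avar_valid S v}. ?M (pivot_eq v) v \<noteq> 0"
    then show "\<forall>j\<in>{1..S}. a (AS j) \<noteq> 0" using diag[of "AV _"] by fastforce
  next
    assume "\<forall>j\<in>{1..S}. a (AS j) \<noteq> 0"
    then show "\<forall>v\<in>{v. avar_valid S v}. ?M (pivot_eq v) v \<noteq> 0"
      using diag by (auto split: avar.split)
  qed
  finally show ?thesis .
qed

lemma xfull_alg_state: "xfull cC (\<lambda>j. x j t) (alg_state cC V s y T x L t) j = x j t"
  by (simp add: xfull_def alg_state_def vec_eq_iff)

lemma alg_state_apply:
  "alg_state cC V s y T x L t (AS j) = s j t"
  "alg_state cC V s y T x L t (AT j) = T j t"
  "alg_state cC V s y T x L t (AL j) = L j t"
  by (simp_all add: alg_state_def)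

theorem mainTheorem8:
  fixes S :: nat and cC :: "'c::finite" and I :: "real set"
    and fvle :: "'c \<Rightarrow> real \<Rightarrow> real \<Rightarrow> real^'c \<Rightarrow> real"
    and fhl fhv :: "real \<Rightarrow> real^'c \<Rightarrow> real" and fhold :: "real \<Rightarrow> real"
    and eps P Q Tc :: "real \<Rightarrow> real"
    and n H T V s L :: "nat \<Rightarrow> real \<Rightarrow> real" and x y :: "nat \<Rightarrow> real \<Rightarrow> real^'c"
  assumes "S \<ge> 2" and "CARD('c) \<ge> 2" and "is_interval I"
    and "\<And>i. C1_map (\<lambda>(p, tt, xx). fvle i p tt xx)"
    and "C1_map (\<lambda>(tt, xx). fhl tt xx)" and "C1_map (\<lambda>(tt, yy). fhv tt yy)" and "C1_map fhold"
    and "C1_on I eps" and "C1_on I P" and "C1_on I Q" and "C1_on I Tc"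
    and "relaxed_solution S cC I fvle fhl fhv fhold eps P Q Tc n H T V s x y L"
    and "\<forall>t\<in>I. eps t \<noteq> 0"
    and "\<forall>t\<in>I. \<forall>j\<in>{1..S}. n j t \<noteq> 0"
    and "\<forall>t\<in>I. \<forall>j\<in>{1..S}. deriv (\<lambda>tt. fhl tt (x j t)) (T j t) \<noteq> 0"
    and "\<forall>t\<in>I. \<forall>j\<in>{1..S-1}. deriv fhold (L j t) \<noteq> 0"
  shows "(\<forall>t\<in>I. jac_nonsingular S cC fvle fhl fhold (eps t) (P t) (\<lambda>j. n j t) (\<lambda>j. H j t)
                   (\<lambda>j. x j t) (alg_state cC V s y T x L t))
         \<longleftrightarrow> (\<forall>t\<in>I. \<forall>j\<in>{1..S}. s j t \<noteq> 0)"
proof -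
  txt \<open>Only the algebraic equations of (R) are used.\<close>
  have "jac_nonsingular S cC fvle fhl fhold (eps t) (P t) (\<lambda>j. n j t) (\<lambda>j. H j t) (\<lambda>j. x j t)
          (alg_state cC V s y T x L t) \<longleftrightarrow> (\<forall>j\<in>{1..S}. s j t \<noteq> 0)"
    if t: "t \<in> I" for t
  proof -
    have "\<forall>e. geq_valid S e \<longrightarrow> gfun S cC fvle fhl fhold (eps t) (P t) (\<lambda>j. n j t) (\<lambda>j. H j t)
            (\<lambda>j. x j t) (alg_state cC V s y T x L t) e = 0"
      using assms(12) t unfolding relaxed_solution_def by blast
    from jac_nonsingular_iff_slacks_nonzero[OF assms(1,5,7) this]
    show ?thesis using assms(13-16) t by (simp add: xfull_alg_state alg_state_apply)
  qed
  then show ?thesis by blast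
qed

end
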